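(* Let $\mathcal V=\{v^{(1)},\dots,v^{(p)}\}\subset(\mathbb{R}\cup\{-\infty\})^n$, none identically $-\infty$, let $V$ be the matrix with columns $v^{(k)}$, with no row identically $-\infty$, and let $E=\{(i,k):V_{ik}\neq-\infty\}$. Let $$T_i(x)=\inf_{k\in[p],\,(i,k)\in E}\Big[-V_{ik}+\max_{j\in[n],\,j\neq i}(V_{jk}+x_j)\Big],\qquad i\in[n].$$ Let $a\in\mathbb{R}^n$ satisfy $T(a)=-\operatorname{inrad}(\mathcal V)+a$, and let $\sigma:[n]\to[p]$ be a map such that $(i,\sigma(i))\in E$ for all $i\in[n]$. Define $T^\sigma_i(x)=-V_{i\sigma(i)}+\max_{j\in[n],\,j\neq i}(V_{j\sigma(i)}+x_j)$. Then $T(a)=T^\sigma(a)$ if and only if for every $i\in[n]$, the column $V_{\cdot\sigma(i)}$ belongs to the sector $S_i(a)$ and satisfies $\operatorname{dist}_H(V_{\cdot\sigma(i)},\mathcal H_a)=\operatorname{dist}_H(\mathcal V,\mathcal H_a)$.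
   Context: $\mathbb{R}_{\max}=\mathbb{R}\cup\{-\infty\}$, $-\infty+c=-\infty$, $\max\emptyset=-\infty$. $\operatorname{inrad}(\mathcal V)$ is the supremum of radii $r$ of Hilbert balls $B(c,r)=\{x:d(c,x)\le r\}$, $c\in\mathbb{R}^n$, included in the tropical cone generated by $\mathcal V$, where $d(x,y)=\inf\{\lambda-\mu:\lambda,\mu\in\mathbb{R},\ \mu+y_j\le x_j\le\lambda+y_j\ \forall j\}$ is Hilbert's projective metric. $\mathcal H_a=\{y:\max_i(a_i+y_i)\text{ achieved at least twice}\}$; $S_i(a)=\{x: x_i+a_i\ge x_j+a_j\ \forall j\}$; $\operatorname{dist}_H(x,B)=\inf_{y\in B}d(x,y)$, $\operatorname{dist}_H(A,B)=\sup_{x\in A}\operatorname{dist}_H(x,B)$. *)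

theory Defs
  imports "HOL-Analysis.Analysis" "HOL-Library.Extended_Real"
begin

text \<open>R_max = ereal without +infinity. Vectors in R_max^n are functions 'n => ereal
  with no entry equal to PInfty. Matrices V in R_max^{n x p} are 'n => 'p => ereal.\<close>

definition rmax_vecs :: "('n \<Rightarrow> ereal) set" where
  "rmax_vecs = {x. \<forall>j. x j \<noteq> \<infinity>}"

text \<open>Hilbert's projective metric, literally as in the paper (inf over reals lambda, mu;
  Inf of the empty set is +infinity).\<close>
definition hilbert_dist :: "('n \<Rightarrow> ereal) \<Rightarrow> ('n \<Rightarrow> ereal) \<Rightarrow> ereal" where
  "hilbert_dist x y = Inf {ereal (l - m) | l m.
      \<forall>j. ereal m + y j \<le> x j \<and> x j \<le> ereal l + y j}"

definition hilbert_ball :: "('n \<Rightarrow> real) \<Rightarrow> real \<Rightarrow> ('n \<Rightarrow> real) set" where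
  "hilbert_ball c r = {x. hilbert_dist (\<lambda>j. ereal (c j)) (\<lambda>j. ereal (x j)) \<le> ereal r}"

definition trop_cone :: "('n \<Rightarrow> 'p \<Rightarrow> ereal) \<Rightarrow> ('n \<Rightarrow> ereal) set" where
  "trop_cone V = {y. \<exists>lam :: 'p \<Rightarrow> ereal. (\<forall>k. lam k \<noteq> \<infinity>) \<and>
      y = (\<lambda>i. SUP k. lam k + V i k)}"

definition inrad :: "('n \<Rightarrow> 'p \<Rightarrow> ereal) \<Rightarrow> ereal" where
  "inrad V = Sup {ereal r | r. \<exists>c. hilbert_ball c r \<subseteq> {x. (\<lambda>j. ereal (x j)) \<in> trop_cone V}}"

definition columns :: "('n \<Rightarrow> 'p \<Rightarrow> ereal) \<Rightarrow> ('n \<Rightarrow> ereal) set" where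
  "columns V = range (\<lambda>k i. V i k)"

definition trop_hyperplane :: "('n \<Rightarrow> real) \<Rightarrow> ('n \<Rightarrow> ereal) set" where
  "trop_hyperplane a = {y \<in> rmax_vecs. \<exists>i j. i \<noteq> j \<and>
      ereal (a i) + y i = (SUP l. ereal (a l) + y l) \<and>
      ereal (a j) + y j = (SUP l. ereal (a l) + y l)}"

definition sector :: "'n \<Rightarrow> ('n \<Rightarrow> real) \<Rightarrow> ('n \<Rightarrow> ereal) set" where
  "sector i a = {x \<in> rmax_vecs. \<forall>j. x j + ereal (a j) \<le> x i + ereal (a i)}"

definition dist_pt_set :: "('n \<Rightarrow> ereal) \<Rightarrow> ('n \<Rightarrow> ereal) set \<Rightarrow> ereal" where
  "dist_pt_set x B = (INF y\<in>B. hilbert_dist x y)"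

definition dist_set :: "('n \<Rightarrow> ereal) set \<Rightarrow> ('n \<Rightarrow> ereal) set \<Rightarrow> ereal" where
  "dist_set A B = (SUP x\<in>A. dist_pt_set x B)"

text \<open>The operator T (inf over k with (i,k) in E) and T^sigma; max over empty = -infinity.\<close>
definition T_op :: "('n \<Rightarrow> 'p \<Rightarrow> ereal) \<Rightarrow> ('n \<Rightarrow> real) \<Rightarrow> 'n \<Rightarrow> ereal" where
  "T_op V x i = (INF k\<in>{k. V i k \<noteq> -\<infinity>}.
      - V i k + (SUP j\<in>UNIV - {i}. V j k + ereal (x j)))"

definition T_sigma :: "('n \<Rightarrow> 'p \<Rightarrow> ereal) \<Rightarrow> ('n \<Rightarrow> 'p) \<Rightarrow> ('n \<Rightarrow> real) \<Rightarrow> 'n \<Rightarrow> ereal" where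
  "T_sigma V \<sigma> x i = - V i (\<sigma> i) + (SUP j\<in>UNIV - {i}. V j (\<sigma> i) + ereal (x j))"

end

(* Write T^k_i(x) = -V_ik + max_{j<>i} (V_jk + x_j) for the k-th term of the infimum defining
   T_i. If the column v = V_.k lies in the sector S_i(a) with v_i finite, its Hilbert distance
   to H_a is exactly a_i - T^k_i(a): a nearest point of H_a is obtained by lowering v_i until
   the maximum of a + y is attained twice. Every column lies in some sector, and the fixed
   point equation says min_k T^k_i(a) = a_i - inrad, so every column is within distance inrad
   of H_a, with equality for a column attaining the minimum. Hence dist_H(V, H_a) = inrad, and
   T^sigma_i(a) = T_i(a) says precisely that column sigma(i) attains this distance from
   within S_i(a). *)

theory Submission
  imports Defs
begin

definition T_term :: "('n \<Rightarrow> ereal) \<Rightarrow> ('n \<Rightarrow> real) \<Rightarrow> 'n \<Rightarrow> ereal" where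
  "T_term v x i = - v i + (SUP j\<in>UNIV - {i}. v j + ereal (x j))"

lemma T_op_eq_INF_T_term:
  "T_op V x i = (INF k\<in>{k. V i k \<noteq> -\<infinity>}. T_term (\<lambda>j. V j k) x i)"
  by (simp add: T_op_def T_term_def)

lemma T_sigma_eq_T_term: "T_sigma V \<sigma> x i = T_term (\<lambda>j. V j (\<sigma> i)) x i"
  by (simp add: T_sigma_def T_term_def)

lemma SUP_attained_finite:
  fixes f :: "'a \<Rightarrow> 'b::complete_linorder"
  assumes "finite A" "A \<noteq> {}"
  obtains x where "x \<in> A" "f x = (SUP y\<in>A. f y)"
proof -
  have "(SUP y\<in>A. f y) \<in> f ` A"
    using assms by (simp add: cSup_eq_Max)
  then show thesis using that by auto
qed

lemma INF_attained_finite: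
  fixes f :: "'a \<Rightarrow> 'b::complete_linorder"
  assumes "finite A" "A \<noteq> {}"
  obtains x where "x \<in> A" "f x = (INF y\<in>A. f y)"
proof -
  have "(INF y\<in>A. f y) \<in> f ` A"
    using assms by (simp add: cInf_eq_Min)
  then show thesis using that by auto
qed

lemma SUP_off_diag_not_PInf:
  fixes v :: "'n::finite \<Rightarrow> ereal"
  assumes "v \<in> rmax_vecs"
  shows "(SUP j\<in>UNIV - {i}. v j + ereal (x j)) \<noteq> \<infinity>"
proof (cases "UNIV - {i} = {}")
  case True
  show ?thesis unfolding True by (simp add: bot_ereal_def)
next
  case False
  then obtain j where "v j + ereal (x j) = (SUP j\<in>UNIV - {i}. v j + ereal (x j))"
    by (rule SUP_attained_finite[OF finite])
  then show ?thesis using assms by (auto simp: rmax_vecs_def)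
qed

lemma T_term_not_PInf:
  fixes v :: "'n::finite \<Rightarrow> ereal"
  assumes "v \<in> rmax_vecs" "v i \<noteq> -\<infinity>"
  shows "T_term v x i \<noteq> \<infinity>"
  using assms SUP_off_diag_not_PInf[OF assms(1), where i=i and x=x]
  by (cases "v i") (auto simp: T_term_def rmax_vecs_def)

lemma sector_iff_T_term_le:
  fixes v :: "'n::finite \<Rightarrow> ereal"
  assumes "v \<in> rmax_vecs" "v i \<noteq> -\<infinity>"
  shows "v \<in> sector i a \<longleftrightarrow> T_term v a i \<le> ereal (a i)"
proof -
  obtain r where r: "v i = ereal r"
    using assms by (cases "v i") (auto simp: rmax_vecs_def)
  have "v \<in> sector i a \<longleftrightarrow> (\<forall>j\<in>UNIV - {i}. v j + ereal (a j) \<le> ereal (r + a i))"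
    using assms(1) r by (auto simp: sector_def)
  also have "\<dots> \<longleftrightarrow> (SUP j\<in>UNIV - {i}. v j + ereal (a j)) \<le> ereal (r + a i)"
    by (simp add: SUP_le_iff)
  also have "\<dots> \<longleftrightarrow> T_term v a i \<le> ereal (a i)"
    using SUP_off_diag_not_PInf[OF assms(1), where i=i and x=a] r
    by (cases "SUP j\<in>UNIV - {i}. v j + ereal (a j)") (auto simp: T_term_def)
  finally show ?thesis .
qed

lemma ex_sector:
  fixes v :: "'n::finite \<Rightarrow> ereal"
  assumes "v \<in> rmax_vecs"
  obtains i where "v \<in> sector i a"
proof -
  obtain i where "v i + ereal (a i) = (SUP j. v j + ereal (a j))"
    by (rule SUP_attained_finite[of "UNIV :: 'n set"]) simp_all
  then have "v \<in> sector i a"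
    using assms by (auto simp: sector_def intro: SUP_upper)
  then show thesis ..
qed

lemma sector_apex_not_MInf:
  assumes "v \<in> sector i a" "v j \<noteq> -\<infinity>"
  shows "v i \<noteq> -\<infinity>"
  using assms by (auto simp: sector_def)

lemma T_term_gap_le_hilbert_dist:
  fixes v :: "'n::finite \<Rightarrow> ereal"
  assumes v: "v \<in> rmax_vecs" "v i = ereal r" and y: "y \<in> trop_hyperplane a"
  shows "ereal (a i) - T_term v a i \<le> hilbert_dist v y"
  unfolding hilbert_dist_def
proof (rule Inf_greatest, clarify)
  \<comment> \<open>compare the bounds \<open>m \<le> v - y \<le> l\<close> at \<open>i\<close> and at an index \<open>p \<noteq> i\<close> maximising \<open>a + y\<close>\<close>
  fix l m assume lm: "\<forall>j. ereal m + y j \<le> v j \<and> v j \<le> ereal l + y j"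
  define S where "S = (SUP j\<in>UNIV - {i}. v j + ereal (a j))"
  define M where "M = (SUP j. ereal (a j) + y j)"
  from y obtain p q where "p \<noteq> q" "ereal (a p) + y p = M" "ereal (a q) + y q = M"
    and y_rmax: "\<And>j. y j \<noteq> \<infinity>"
    unfolding trop_hyperplane_def rmax_vecs_def M_def by blast
  then obtain p where p: "p \<noteq> i" "ereal (a p) + y p = M"
    by metis
  have "ereal r \<le> ereal l + y i"
    using lm v(2) by metis
  with y_rmax obtain yi where yi: "y i = ereal yi" "r - l \<le> yi"
    by (cases "y i") auto
  have "ereal (a i + yi) \<le> M"
    unfolding M_def using yi by (intro SUP_upper2[of i]) auto
  with p y_rmax obtain yp where yp: "y p = ereal yp" "a i + yi \<le> a p + yp"
    by (cases "y p") auto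
  have "ereal m + y p \<le> v p"
    using lm by blast
  then have "ereal (m + yp + a p) \<le> v p + ereal (a p)"
    using yp by (cases "v p") auto
  also have "\<dots> \<le> S"
    unfolding S_def using p by (intro SUP_upper) auto
  finally have "ereal (m + a i + r - l) \<le> S"
    using yi yp by (auto elim: order_trans[rotated])
  moreover have "S \<noteq> \<infinity>"
    unfolding S_def by (rule SUP_off_diag_not_PInf[OF v(1)])
  ultimately show "ereal (a i) - T_term v a i \<le> ereal (l - m)"
    using v(2) by (cases S) (auto simp: T_term_def S_def[symmetric])
qed

lemma dist_pt_hyperplane_le_T_term_gap:
  fixes v :: "'n::finite \<Rightarrow> ereal"
  assumes v: "v \<in> sector i a" "v i = ereal r"
  shows "dist_pt_set v (trop_hyperplane a) \<le> ereal (a i) - T_term v a i"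
proof -
  define S where "S = (SUP j\<in>UNIV - {i}. v j + ereal (a j))"
  have v_rmax: "v \<in> rmax_vecs"
    using v(1) by (simp add: sector_def)
  have S_le: "S \<le> ereal (r + a i)"
    using v by (auto simp: S_def sector_def intro!: SUP_least)
  show ?thesis
  proof (cases S)
    case MInf
    then show ?thesis using v(2) by (simp add: T_term_def S_def[symmetric])
  next
    case PInf
    then show ?thesis using S_le by simp
  next
    case (real s)
    have "UNIV - {i} \<noteq> {}"
    proof
      assume empty: "UNIV - {i} = {}"
      have "S = -\<infinity>"
        unfolding S_def empty by (simp add: bot_ereal_def)
      with real show False by simp
    qed
    then obtain q where q: "q \<in> UNIV - {i}" "v q + ereal (a q) = S"
      unfolding S_def by (rule SUP_attained_finite[OF finite])
    define y where "y = v(i := ereal (s - a i))"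
    have off_le: "v j + ereal (a j) \<le> ereal s" if "j \<noteq> i" for j
      unfolding real[symmetric] S_def using that by (intro SUP_upper) auto
    have "(SUP j. ereal (a j) + y j) = ereal s"
    proof (rule antisym)
      show "(SUP j. ereal (a j) + y j) \<le> ereal s"
        using off_le by (intro SUP_least) (auto simp: y_def add.commute)
      show "ereal s \<le> (SUP j. ereal (a j) + y j)"
        by (rule SUP_upper2[of i]) (auto simp: y_def)
    qed
    moreover have "ereal (a q) + y q = ereal s" "ereal (a i) + y i = ereal s"
      using q real by (auto simp: y_def add.commute)
    moreover have "y \<in> rmax_vecs"
      using v_rmax by (auto simp: y_def rmax_vecs_def)
    ultimately have y_H: "y \<in> trop_hyperplane a"
      unfolding trop_hyperplane_def using q(1) by auto
    have s_le: "s \<le> r + a i"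
      using S_le real by simp
    have "hilbert_dist v y \<le> ereal ((r + a i - s) - 0)"
      unfolding hilbert_dist_def
    proof (rule Inf_lower, intro CollectI exI conjI allI)
      fix j
      show "ereal 0 + y j \<le> v j"
        using s_le v(2) by (auto simp: y_def)
      show "v j \<le> ereal (r + a i - s) + y j"
        using s_le v(2) v_rmax by (cases "v j") (auto simp: y_def rmax_vecs_def)
    qed simp
    then have "dist_pt_set v (trop_hyperplane a) \<le> ereal (r + a i - s)"
      unfolding dist_pt_set_def using y_H by (auto intro: INF_lower2)
    then show ?thesis
      using v(2) real by (simp add: T_term_def S_def[symmetric] algebra_simps)
  qed
qed

lemma dist_pt_hyperplane_sector:
  fixes v :: "'n::finite \<Rightarrow> ereal"
  assumes "v \<in> sector i a" "v i \<noteq> -\<infinity>"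
  shows "dist_pt_set v (trop_hyperplane a) = ereal (a i) - T_term v a i"
proof -
  have v_rmax: "v \<in> rmax_vecs"
    using assms(1) by (simp add: sector_def)
  then obtain r where r: "v i = ereal r"
    using assms(2) by (cases "v i") (auto simp: rmax_vecs_def)
  show ?thesis
  proof (rule antisym)
    show "dist_pt_set v (trop_hyperplane a) \<le> ereal (a i) - T_term v a i"
      using assms(1) r by (rule dist_pt_hyperplane_le_T_term_gap)
    show "ereal (a i) - T_term v a i \<le> dist_pt_set v (trop_hyperplane a)"
      unfolding dist_pt_set_def
      using T_term_gap_le_hilbert_dist[OF v_rmax r] by (rule INF_greatest)
  qed
qed

lemma ereal_diff_eq_iff_eq_uminus_add:
  fixes c d :: ereal
  assumes "c \<noteq> \<infinity>"
  shows "ereal x - c = d \<longleftrightarrow> c = - d + ereal x"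
  using assms by (cases c; cases d) auto

lemma T_op_le_T_term: "V i k \<noteq> -\<infinity> \<Longrightarrow> T_op V x i \<le> T_term (\<lambda>j. V j k) x i"
  unfolding T_op_eq_INF_T_term by (rule INF_lower) simp

lemma T_op_attained:
  fixes V :: "'n \<Rightarrow> 'p::finite \<Rightarrow> ereal"
  assumes "V i k' \<noteq> -\<infinity>"
  obtains k where "V i k \<noteq> -\<infinity>" "T_op V x i = T_term (\<lambda>j. V j k) x i"
proof -
  have "{k. V i k \<noteq> -\<infinity>} \<noteq> {}"
    using assms by blast
  then obtain k where "k \<in> {k. V i k \<noteq> -\<infinity>}"
    and "T_term (\<lambda>j. V j k) x i = T_op V x i"
    unfolding T_op_eq_INF_T_term by (rule INF_attained_finite[OF finite])
  with that show thesis by simp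
qed

lemma column_in_sector:
  fixes V :: "'n::finite \<Rightarrow> 'p \<Rightarrow> ereal"
  assumes rmax: "\<And>i k. V i k \<noteq> \<infinity>" and "V j k \<noteq> -\<infinity>"
  obtains i where "(\<lambda>j. V j k) \<in> sector i a" "V i k \<noteq> -\<infinity>"
proof -
  have "(\<lambda>j. V j k) \<in> rmax_vecs"
    using rmax by (simp add: rmax_vecs_def)
  then obtain i where "(\<lambda>j. V j k) \<in> sector i a"
    by (rule ex_sector)
  moreover from this have "V i k \<noteq> -\<infinity>"
    using assms(2) by (rule sector_apex_not_MInf)
  ultimately show thesis ..
qed

text \<open>Below, \<open>R\<close> stands for \<open>inrad V\<close>: only the fixed point equation \<open>T(a) = -R + a\<close> is
  needed, not the definition of the inner radius.\<close>

lemma fixpoint_shift_nonneg: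
  fixes V :: "'n::finite \<Rightarrow> 'p \<Rightarrow> ereal"
  assumes rmax: "\<And>i k. V i k \<noteq> \<infinity>" and "V j k \<noteq> -\<infinity>"
    and fixpt: "\<And>i. T_op V a i = - R + ereal (a i)"
  shows "0 \<le> R"
proof -
  obtain i where sec: "(\<lambda>j. V j k) \<in> sector i a" and fin: "V i k \<noteq> -\<infinity>"
    using rmax assms(2) by (rule column_in_sector)
  have "- R + ereal (a i) \<le> T_term (\<lambda>j. V j k) a i"
    unfolding fixpt[symmetric] using fin by (rule T_op_le_T_term)
  also have "\<dots> \<le> ereal (a i)"
    using sec fin rmax by (simp add: sector_iff_T_term_le rmax_vecs_def)
  finally show ?thesis
    by (cases R) auto
qed

lemma dist_column_hyperplane_le_shift:
  fixes V :: "'n::finite \<Rightarrow> 'p \<Rightarrow> ereal"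
  assumes rmax: "\<And>i k. V i k \<noteq> \<infinity>" and "V j k \<noteq> -\<infinity>"
    and fixpt: "\<And>i. T_op V a i = - R + ereal (a i)"
  shows "dist_pt_set (\<lambda>j. V j k) (trop_hyperplane a) \<le> R"
proof -
  obtain i where sec: "(\<lambda>j. V j k) \<in> sector i a" and fin: "V i k \<noteq> -\<infinity>"
    using rmax assms(2) by (rule column_in_sector)
  have "dist_pt_set (\<lambda>j. V j k) (trop_hyperplane a) = ereal (a i) - T_term (\<lambda>j. V j k) a i"
    using sec fin by (rule dist_pt_hyperplane_sector)
  also have "\<dots> \<le> ereal (a i) - T_op V a i"
    using fin by (intro ereal_minus_mono T_op_le_T_term) simp
  also have "\<dots> = R"
    unfolding fixpt by (cases R) auto
  finally show ?thesis .
qed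

lemma T_op_eq_T_term_iff:
  fixes V :: "'n::finite \<Rightarrow> 'p \<Rightarrow> ereal"
  assumes rmax: "\<And>i k. V i k \<noteq> \<infinity>" and fin: "V i k \<noteq> -\<infinity>"
    and fixpt: "\<And>i. T_op V a i = - R + ereal (a i)"
  shows "T_op V a i = T_term (\<lambda>j. V j k) a i \<longleftrightarrow>
    (\<lambda>j. V j k) \<in> sector i a \<and> dist_pt_set (\<lambda>j. V j k) (trop_hyperplane a) = R"
proof -
  let ?v = "\<lambda>j. V j k"
  have v_rmax: "?v \<in> rmax_vecs"
    using rmax by (simp add: rmax_vecs_def)
  have R: "0 \<le> R"
    using rmax fin fixpt by (rule fixpoint_shift_nonneg)
  have dist_eq_iff: "dist_pt_set ?v (trop_hyperplane a) = R \<longleftrightarrow> T_term ?v a i = - R + ereal (a i)"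
    if "?v \<in> sector i a"
    using dist_pt_hyperplane_sector[OF that] fin T_term_not_PInf[OF v_rmax]
    by (simp add: ereal_diff_eq_iff_eq_uminus_add)
  show ?thesis
  proof
    assume "T_op V a i = T_term ?v a i"
    then have T_term_eq: "T_term ?v a i = - R + ereal (a i)"
      by (simp add: fixpt)
    with R have "?v \<in> sector i a"
      using fin by (simp add: sector_iff_T_term_le[OF v_rmax]) (cases R; simp)
    with T_term_eq dist_eq_iff show "?v \<in> sector i a \<and> dist_pt_set ?v (trop_hyperplane a) = R"
      by blast
  next
    assume "?v \<in> sector i a \<and> dist_pt_set ?v (trop_hyperplane a) = R"
    with dist_eq_iff show "T_op V a i = T_term ?v a i"
      by (simp add: fixpt)
  qed
qed

lemma dist_columns_hyperplane_eq_shift: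
  fixes V :: "'n::finite \<Rightarrow> 'p::finite \<Rightarrow> ereal"
  assumes rmax: "\<And>i k. V i k \<noteq> \<infinity>"
    and cols: "\<And>k. \<exists>i. V i k \<noteq> -\<infinity>"
    and rows: "\<And>i. \<exists>k. V i k \<noteq> -\<infinity>"
    and fixpt: "\<And>i. T_op V a i = - R + ereal (a i)"
  shows "dist_set (columns V) (trop_hyperplane a) = R"
proof (rule antisym)
  show "dist_set (columns V) (trop_hyperplane a) \<le> R"
    unfolding dist_set_def columns_def
  proof (rule SUP_least, clarify)
    fix k
    obtain j where "V j k \<noteq> -\<infinity>"
      using cols by blast
    then show "dist_pt_set (\<lambda>j. V j k) (trop_hyperplane a) \<le> R"
      using rmax fixpt by (intro dist_column_hyperplane_le_shift)
  qed
next
  fix i :: 'n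
  obtain k where fin: "V i k \<noteq> -\<infinity>" and "T_op V a i = T_term (\<lambda>j. V j k) a i"
    using rows[of i] T_op_attained by metis
  then have "dist_pt_set (\<lambda>j. V j k) (trop_hyperplane a) = R"
    using T_op_eq_T_term_iff[OF rmax fin fixpt] by blast
  then show "R \<le> dist_set (columns V) (trop_hyperplane a)"
    unfolding dist_set_def columns_def by (auto intro: SUP_upper2)
qed

theorem proposition4p10:
  fixes V :: "'n::finite \<Rightarrow> 'p::finite \<Rightarrow> ereal"
    and a :: "'n \<Rightarrow> real"
    and \<sigma> :: "'n \<Rightarrow> 'p"
  assumes rmax: "\<And>i k. V i k \<noteq> \<infinity>"
    and cols: "\<And>k. \<exists>i. V i k \<noteq> -\<infinity>"
    and rows: "\<And>i. \<exists>k. V i k \<noteq> -\<infinity>"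
    and fixpt: "\<And>i. T_op V a i = - inrad V + ereal (a i)"
    and sigE: "\<And>i. V i (\<sigma> i) \<noteq> -\<infinity>"
  shows "(\<forall>i. T_op V a i = T_sigma V \<sigma> a i) \<longleftrightarrow>
         (\<forall>i. (\<lambda>j. V j (\<sigma> i)) \<in> sector i a \<and>
              dist_pt_set (\<lambda>j. V j (\<sigma> i)) (trop_hyperplane a)
                = dist_set (columns V) (trop_hyperplane a))"
proof -
  have "dist_set (columns V) (trop_hyperplane a) = inrad V"
    using rmax cols rows fixpt by (rule dist_columns_hyperplane_eq_shift)
  moreover have "T_op V a i = T_sigma V \<sigma> a i \<longleftrightarrow>
      (\<lambda>j. V j (\<sigma> i)) \<in> sector i a \<and>
      dist_pt_set (\<lambda>j. V j (\<sigma> i)) (trop_hyperplane a) = inrad V" for i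
    unfolding T_sigma_eq_T_term using rmax sigE fixpt by (rule T_op_eq_T_term_iff)
  ultimately show ?thesis
    by simp
qed

end
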